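(* For every classical type $A$ of $\lambda_Q$, $\flat[\![A]\!]\simeq[\![A]\!]$, i.e. $[\![\flat[\![A]\!]]\!]=[\![[\![A]\!]]\!]$.
   Context: Classical types of $\lambda_Q$: $A,B::=\mathbb U\mid A\to B\mid A\times B\mid\mathsf{bit}\mid A_Q\multimap B_Q$, with quantum types $A_Q,B_Q::=\mathsf{qbit}\mid A_Q\otimes B_Q$. Their translation into unitary types: $[\![\mathsf{bit}]\!]=\mathbb U+\mathbb U$, $[\![\mathbb U]\!]=\mathbb U$, $[\![A\times B]\!]=[\![A]\!]\times[\![B]\!]$, $[\![A\to B]\!]=[\![A]\!]\rightarrow[\![B]\!]$, $[\![A_Q\multimap B_Q]\!]=\mathbb U\rightarrow([\![A_Q]\!]\Rightarrow[\![B_Q]\!])$, $[\![\mathsf{qbit}]\!]=\sharp(\mathbb U+\mathbb U)$, $[\![A_Q\otimes B_Q]\!]=\sharp([\![A_Q]\!]\times[\![B_Q]\!])$. Unitary types are interpreted in a linear-algebraic lambda-calculus (pure values $v::=x\mid\lambda x.\vec s\mid *\mid(v_1,v_2)\mid\mathtt{inl}(v)\mid\mathtt{inr}(v)$; distributions are formal $\mathbb C$-combinations of pure terms modulo the weak-vector-space congruence, with canonical forms $\sum_i\alpha_iv_i$ with distinct $v_i$, domain $\{v_i\}$; pairs/inl/inr extended (bi)linearly) as sets of closed value distributions of norm $1$ ($\|\sum_i\alpha_iv_i\|^2=\sum_i|\alpha_i|^2$, unit sphere $\mathcal S$): $[\![\mathbb U]\!]=\{*\}$, $[\![\flat A]\!]=\bigcup_{\vec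 v\in[\![A]\!]}\mathrm{dom}(\vec v)$, $[\![\sharp A]\!]=\mathrm{Span}([\![A]\!])\cap\mathcal S$, $[\![A+B]\!]=\{\mathtt{inl}(\vec v):\vec v\in[\![A]\!]\}\cup\{\mathtt{inr}(\vec w):\vec w\in[\![B]\!]\}$, $[\![A\times B]\!]=\{(\vec v,\vec w):\vec v\in[\![A]\!],\vec w\in[\![B]\!]\}$, $[\![A\rightarrow B]\!]=\{\lambda x.\vec t\ \text{closed}:\forall\vec v\in[\![A]\!],\ \vec t\langle x:=\vec v\rangle\Vdash B\}$, $[\![A\Rightarrow B]\!]=\{(\sum_i\alpha_i\lambda x.\vec t_i)\in\mathcal S:\forall\vec v\in[\![A]\!],\ \sum_i\alpha_i\vec t_i\langle x:=\vec v\rangle\Vdash B\}$ (bilinear substitution $\vec t\langle x:=\sum_j\beta_jw_j\rangle=\sum_j\beta_j\vec t[x:=w_j]$; $\Vdash B$ means evaluating, under linear call-by-value evaluation, to an element of $[\![B]\!]$). $A\simeq B$ means the two unitary types have the same semantics. *)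

theory Defs
  imports Complex_Main
begin

text \<open>Bodies of abstractions (term distributions) are kept abstract, of type 'b.\<close>

datatype 'b pval =
    PVar string
  | PLam string 'b
  | PStar
  | PPair "'b pval" "'b pval"
  | PInl "'b pval"
  | PInr "'b pval"

text \<open>A value distribution in canonical form: sum of alpha_i v_i with distinct v_i,
  represented by the finite partial map v_i -> alpha_i. Its domain is dom.\<close>
type_synonym 'b dist = "'b pval \<Rightarrow> complex option"

definition pure :: "'b pval \<Rightarrow> 'b dist" where
  "pure v = [v \<mapsto> 1]"

definition dnorm2 :: "'b dist \<Rightarrow> real" where
  "dnorm2 d = (\<Sum>v\<in>dom d. (cmod (the (d v)))^2)"

definition unit_sphere :: "'b dist set" where
  "unit_sphere = {d. finite (dom d) \<and> dnorm2 d = 1}"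

definition dscale :: "complex \<Rightarrow> 'b dist \<Rightarrow> 'b dist" where
  "dscale a d = (\<lambda>v. map_option ((*) a) (d v))"

definition dadd :: "'b dist \<Rightarrow> 'b dist \<Rightarrow> 'b dist" where
  "dadd d e = (\<lambda>v. case (d v, e v) of
       (Some a, Some b) \<Rightarrow> Some (a + b)
     | (Some a, None) \<Rightarrow> Some a
     | (None, Some b) \<Rightarrow> Some b
     | (None, None) \<Rightarrow> None)"

text \<open>Bilinear / linear extensions of the constructors.\<close>
definition dpair :: "'b dist \<Rightarrow> 'b dist \<Rightarrow> 'b dist" where
  "dpair d e = (\<lambda>u. case u of
       PPair a b \<Rightarrow> (case (d a, e b) of (Some x, Some y) \<Rightarrow> Some (x * y) | _ \<Rightarrow> None)
     | _ \<Rightarrow> None)"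

definition dinl :: "'b dist \<Rightarrow> 'b dist" where
  "dinl d = (\<lambda>u. case u of PInl a \<Rightarrow> d a | _ \<Rightarrow> None)"

definition dinr :: "'b dist \<Rightarrow> 'b dist" where
  "dinr d = (\<lambda>u. case u of PInr a \<Rightarrow> d a | _ \<Rightarrow> None)"

text \<open>Span: (nonempty) finite linear combinations.\<close>
inductive_set dspan :: "'b dist set \<Rightarrow> 'b dist set" for X where
  base: "d \<in> X \<Longrightarrow> d \<in> dspan X"
| scale: "d \<in> dspan X \<Longrightarrow> dscale a d \<in> dspan X"
| add: "d \<in> dspan X \<Longrightarrow> e \<in> dspan X \<Longrightarrow> dadd d e \<in> dspan X"

text \<open>The term language and linear call-by-value evaluation are not given in the context;
  they are abstracted as parameters:
  fvars t: free variables of a term distribution t;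
  subst_real x t v X: "t<x:=v> evaluates to an element of X";
  sup_real d v X: for d = sum alpha_i lambda x. t_i, "sum alpha_i t_i<x:=v> evaluates to an element of X".\<close>
record 'b lmodel =
  fvars :: "'b \<Rightarrow> string set"
  subst_real :: "string \<Rightarrow> 'b \<Rightarrow> 'b dist \<Rightarrow> 'b dist set \<Rightarrow> bool"
  sup_real :: "'b dist \<Rightarrow> 'b dist \<Rightarrow> 'b dist set \<Rightarrow> bool"

fun closedv :: "('b \<Rightarrow> string set) \<Rightarrow> 'b pval \<Rightarrow> bool" where
  "closedv fv (PVar x) = False"
| "closedv fv (PLam x t) = (fv t \<subseteq> {x})"
| "closedv fv PStar = True"
| "closedv fv (PPair a b) = (closedv fv a \<and> closedv fv b)"
| "closedv fv (PInl a) = closedv fv a"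
| "closedv fv (PInr a) = closedv fv a"

datatype utype =
    UUnit
  | USum utype utype
  | UProd utype utype
  | UArr utype utype      (* A \<rightarrow> B *)
  | ULArr utype utype     (* A \<Rightarrow> B *)
  | USharp utype
  | UFlat utype

fun usem :: "'b lmodel \<Rightarrow> utype \<Rightarrow> 'b dist set" where
  "usem M UUnit = {pure PStar}"
| "usem M (UFlat A) = pure ` (\<Union>d\<in>usem M A. dom d)"
| "usem M (USharp A) = dspan (usem M A) \<inter> unit_sphere"
| "usem M (USum A B) = dinl ` usem M A \<union> dinr ` usem M B"
| "usem M (UProd A B) = {dpair d e | d e. d \<in> usem M A \<and> e \<in> usem M B}"
| "usem M (UArr A B) = {pure (PLam x t) | x t. closedv (fvars M) (PLam x t) \<and>
        (\<forall>v\<in>usem M A. subst_real M x t v (usem M B))}"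
| "usem M (ULArr A B) = {d \<in> unit_sphere.
        (\<forall>u\<in>dom d. closedv (fvars M) u \<and> (\<exists>x t. u = PLam x t)) \<and>
        (\<forall>v\<in>usem M A. sup_real M d v (usem M B))}"

definition usim :: "'b lmodel \<Rightarrow> utype \<Rightarrow> utype \<Rightarrow> bool" where
  "usim M A B \<longleftrightarrow> usem M A = usem M B"

datatype qtype = QBit | QTensor qtype qtype

datatype ctype = CUnit | CArr ctype ctype | CProd ctype ctype | CBit | CLolli qtype qtype

definition ubit :: utype where "ubit = USum UUnit UUnit"

fun qtrans :: "qtype \<Rightarrow> utype" where
  "qtrans QBit = USharp ubit"
| "qtrans (QTensor A B) = USharp (UProd (qtrans A) (qtrans B))"

fun ctrans :: "ctype \<Rightarrow> utype" where
  "ctrans CBit = ubit"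
| "ctrans CUnit = UUnit"
| "ctrans (CProd A B) = UProd (ctrans A) (ctrans B)"
| "ctrans (CArr A B) = UArr (ctrans A) (ctrans B)"
| "ctrans (CLolli A B) = UArr UUnit (ULArr (qtrans A) (qtrans B))"

end

theory Submission
  imports Defs
begin

text \<open>The translation of a classical type never puts a \<open>\<sharp>\<close> at top level (arrow types denote
  single closures, \<open>\<Rightarrow>\<close> occurs only under \<open>\<rightarrow>\<close>), so its denotation consists of pure values
  only; flattening a set of pure values gives it back unchanged.\<close>

lemma dom_pure [simp]: "dom (pure v) = {v}"
  by (simp add: pure_def)

lemma dinl_pure [simp]: "dinl (pure v) = pure (PInl v)"
  by (rule ext) (auto simp: dinl_def pure_def split: pval.splits)

lemma dinr_pure [simp]: "dinr (pure v) = pure (PInr v)"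
  by (rule ext) (auto simp: dinr_def pure_def split: pval.splits)

lemma dpair_pure [simp]: "dpair (pure a) (pure b) = pure (PPair a b)"
  by (rule ext) (auto simp: dpair_def pure_def split: pval.splits)

lemma image_pure_dom_Union:
  assumes "X \<subseteq> range pure"
  shows "pure ` (\<Union>d\<in>X. dom d) = X"
proof -
  have "pure ` dom d = {d}" if "d \<in> X" for d
  proof -
    obtain v where "d = pure v" using \<open>d \<in> X\<close> assms by blast
    then show ?thesis by simp
  qed
  then show ?thesis
    by (simp add: image_UN)
qed

lemma usem_UFlat_eq:
  assumes "usem M A \<subseteq> range pure"
  shows "usem M (UFlat A) = usem M A"
  using image_pure_dom_Union[OF assms] by simp

lemma usem_ctrans_subset_range_pure: "usem M (ctrans A) \<subseteq> range pure"
proof (induction A)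
  case (CProd A B)
  then show ?case by fastforce
qed (auto simp: ubit_def)

theorem lemma6:
  fixes M :: "'b lmodel" and A :: ctype
  shows "usim M (UFlat (ctrans A)) (ctrans A)"
  unfolding usim_def using usem_UFlat_eq[OF usem_ctrans_subset_range_pure] .

end
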